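(* Let $n\ge1$, $l>2$ an odd integer, $\varepsilon$ a primitive $l$-th root of unity, $\lambda=(\lambda_i)_{i=1}^n\in\{0,\dots,l-1\}^n$ with $\lambda\neq0$, and $\mathbf a_+,\mathbf a_-\in\mathbb C^\times$. Write $\mathrm{supp}(\lambda)=\{i\mid\lambda_i\ne0\}=\{i_1,\dots,i_m\}$ with $i_1<\dots<i_m$, and $\lambda^{(i)}=\sum_{k=1}^{i-1}\lambda_k-\sum_{k=i+1}^n\lambda_k$. Then $\mathbf a_+=\mathbf a_-\varepsilon^{2(\lambda^{(i)}+i)}$ for all $i\in\mathrm{supp}(\lambda)$ if and only if both of the following hold: (a) for every $2\le r\le m$, $$\lambda_{i_r}\equiv(-1)^{r-1}\lambda_{i_1}+(-1)^r i_1-i_r+2\sum_{k=2}^{r-1}(-1)^{r-1+k}i_k\not\equiv0\pmod l;$$ (b) $\mathbf a_+=\mathbf a_-\varepsilon^{2\sum_{k=1}^m(-1)^{k-1}i_k}$ if $m$ is odd, and $\mathbf a_+=\mathbf a_-\varepsilon^{2(\lambda_{i_1}+\sum_{k=2}^m(-1)^k i_k)}$ if $m$ is even. *)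

theory Defs
  imports "HOL-Analysis.Analysis" "HOL-Number_Theory.Cong"
begin

definition primitive_root_of_unity :: "nat \<Rightarrow> complex \<Rightarrow> bool" where
  "primitive_root_of_unity l e \<longleftrightarrow> e ^ l = 1 \<and> (\<forall>k. 0 < k \<and> k < l \<longrightarrow> e ^ k \<noteq> 1)"

definition supp :: "nat \<Rightarrow> (nat \<Rightarrow> nat) \<Rightarrow> nat set" where
  "supp n lam = {i \<in> {1..n}. lam i \<noteq> 0}"

definition supp_idx :: "nat \<Rightarrow> (nat \<Rightarrow> nat) \<Rightarrow> nat \<Rightarrow> nat" where
  "supp_idx n lam k = sorted_list_of_set (supp n lam) ! (k - 1)"

definition lam_sup :: "nat \<Rightarrow> (nat \<Rightarrow> nat) \<Rightarrow> nat \<Rightarrow> int" where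
  "lam_sup n lam i = (\<Sum>k=1..i-1. int (lam k)) - (\<Sum>k=i+1..n. int (lam k))"

end

theory Submission
  imports Defs
begin

(* Write i_1 < ... < i_m for the support, a_r = lambda_{i_r} and f_r = lambda^{(i_r)} + i_r.
   As l is odd, eps^2 is again a primitive l-th root of unity, so the left-hand side says that
   all f_r are congruent mod l and a_+ = a_- eps^(2 f_1).  Between consecutive support points
   f_{r+1} - f_r = a_r + a_{r+1} + i_{r+1} - i_r, so these congruences determine every a_r mod l
   from a_1 by a linear recursion, whose closed form is (a); its non-vanishing is automatic
   because 0 < a_r < l.  Summing the recursion shows f_m = a_1 + ... + a_{m-1} + i_m to be
   congruent to the exponent in (b). *)

lemma primitive_root_of_unity_nonzero:
  assumes "primitive_root_of_unity l e" "l > 0"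
  shows "e \<noteq> 0"
  using assms unfolding primitive_root_of_unity_def by (metis zero_neq_one zero_power)

lemma primitive_root_of_unity_powi_eq_1_iff:
  assumes "primitive_root_of_unity l e" "l > 0"
  shows "e powi k = 1 \<longleftrightarrow> int l dvd k"
proof -
  define j where "j = nat (k mod int l)"
  have j: "int j = k mod int l" "j < l"
    using assms(2) by (auto simp: j_def nat_less_iff)
  have "e powi k = e powi (k mod int l + int l * (k div int l))"
    by simp
  also have "\<dots> = e powi (k mod int l) * (e powi int l) powi (k div int l)"
    using primitive_root_of_unity_nonzero[OF assms] by (metis power_int_add power_int_mult)
  also have "e powi int l = 1"
    using assms(1) by (simp add: primitive_root_of_unity_def)
  finally have "e powi k = e ^ j"
    by (simp flip: j(1))
  moreover have "e ^ j = 1 \<longleftrightarrow> j = 0"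
    using assms(1) j(2) by (auto simp: primitive_root_of_unity_def)
  ultimately show ?thesis
    using j(1) by (auto simp: dvd_eq_mod_eq_0)
qed

lemma primitive_root_of_unity_powi_eq_iff:
  assumes "primitive_root_of_unity l e" "l > 0"
  shows "e powi x = e powi y \<longleftrightarrow> [x = y] (mod int l)"
proof -
  have "e powi y \<noteq> 0"
    using primitive_root_of_unity_nonzero[OF assms] by simp
  then have "e powi x = e powi y \<longleftrightarrow> e powi (x - y) = 1"
    using primitive_root_of_unity_nonzero[OF assms] by (auto simp: power_int_diff)
  then show ?thesis
    by (simp add: primitive_root_of_unity_powi_eq_1_iff[OF assms] cong_iff_dvd_diff)
qed

lemma primitive_root_of_unity_powi_double_eq_iff:
  assumes "primitive_root_of_unity l e" "odd l"
  shows "e powi (2 * x) = e powi (2 * y) \<longleftrightarrow> [x = y] (mod int l)"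
proof -
  have "l > 0" "coprime 2 (int l)"
    using assms(2) by (auto intro: odd_pos)
  then show ?thesis
    by (simp add: primitive_root_of_unity_powi_eq_iff[OF assms(1)] cong_mult_lcancel)
qed

lemma primitive_root_of_unity_all_eq_iff:
  assumes "primitive_root_of_unity l e" "odd l" "c \<noteq> 0" "r\<^sub>0 \<in> R"
  shows "(\<forall>r\<in>R. b = c * e powi (2 * f r)) \<longleftrightarrow>
    (\<forall>r\<in>R. [f r = f r\<^sub>0] (mod int l)) \<and> b = c * e powi (2 * f r\<^sub>0)"
proof -
  have "b = c * e powi (2 * f r) \<longleftrightarrow> [f r = f r\<^sub>0] (mod int l)"
    if "b = c * e powi (2 * f r\<^sub>0)" for r
    using that assms(3) by (auto simp flip: primitive_root_of_unity_powi_double_eq_iff[OF assms(1,2)])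
  moreover have "(\<forall>r\<in>R. b = c * e powi (2 * f r)) \<Longrightarrow> b = c * e powi (2 * f r\<^sub>0)"
    using assms(4) by blast
  ultimately show ?thesis
    by blast
qed

lemma strict_mono_on_image_Int_lessThan:
  fixes g :: "'a::linorder \<Rightarrow> 'b::preorder"
  assumes "strict_mono_on A g" "r \<in> A"
  shows "g ` A \<inter> {..<g r} = g ` {s\<in>A. s < r}"
  using assms by (auto simp: strict_mono_on_less[OF assms(1) _ assms(2)])

lemma strict_mono_on_image_Int_greaterThan:
  fixes g :: "'a::linorder \<Rightarrow> 'b::preorder"
  assumes "strict_mono_on A g" "r \<in> A"
  shows "g ` A \<inter> {g r<..} = g ` {s\<in>A. r < s}"
  using assms by (auto simp: strict_mono_on_less[OF assms(1) assms(2)])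

lemma supp_finite: "finite (supp n lam)"
  unfolding supp_def by simp

lemma one_le_card_supp:
  assumes "\<exists>i\<in>{1..n}. lam i \<noteq> 0"
  shows "card (supp n lam) \<ge> 1"
proof -
  have "supp n lam \<noteq> {}"
    using assms by (auto simp: supp_def)
  then show ?thesis
    using supp_finite by (simp add: Suc_le_eq card_gt_0_iff)
qed

lemma supp_idx_strict_mono: "strict_mono_on {1..card (supp n lam)} (supp_idx n lam)"
proof (rule strict_mono_onI)
  fix r s
  assume "r \<in> {1..card (supp n lam)}" "s \<in> {1..card (supp n lam)}" "r < s"
  then show "supp_idx n lam r < supp_idx n lam s"
    unfolding supp_idx_def
    by (intro sorted_wrt_nth_less[where P = "(<)"]) (auto simp: supp_finite)
qed

lemma bij_betw_supp_idx: "bij_betw (supp_idx n lam) {1..card (supp n lam)} (supp n lam)"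
proof -
  let ?xs = "sorted_list_of_set (supp n lam)"
  have "supp_idx n lam = (!) ?xs \<circ> (\<lambda>k. k - 1)"
    by (simp add: fun_eq_iff supp_idx_def)
  moreover have "bij_betw (\<lambda>k. k - 1) {1..card (supp n lam)} {..<length ?xs}"
    by (rule bij_betwI[where g = Suc]) auto
  moreover have "bij_betw ((!) ?xs) {..<length ?xs} (supp n lam)"
    by (rule bij_betw_nth) (simp_all add: supp_finite)
  ultimately show ?thesis
    by (metis bij_betw_trans)
qed

lemma ball_supp_iff:
  "(\<forall>j\<in>supp n lam. P j) \<longleftrightarrow> (\<forall>r\<in>{1..card (supp n lam)}. P (supp_idx n lam r))"
proof
  assume "\<forall>j\<in>supp n lam. P j"
  then show "\<forall>r\<in>{1..card (supp n lam)}. P (supp_idx n lam r)"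
    using bij_betw_apply[OF bij_betw_supp_idx] by blast
next
  assume all: "\<forall>r\<in>{1..card (supp n lam)}. P (supp_idx n lam r)"
  show "\<forall>j\<in>supp n lam. P j"
  proof
    fix j
    assume "j \<in> supp n lam"
    then have "j \<in> supp_idx n lam ` {1..card (supp n lam)}"
      using bij_betw_imp_surj_on[OF bij_betw_supp_idx] by simp
    with all show "P j"
      by blast
  qed
qed

lemma supp_weight_nonzero:
  assumes "\<forall>i\<in>{1..n}. lam i < l" "r \<in> {1..card (supp n lam)}"
  shows "[int (lam (supp_idx n lam r)) \<noteq> 0] (mod int l)"
proof -
  have "supp_idx n lam r \<in> supp n lam"
    using bij_betw_apply[OF bij_betw_supp_idx assms(2)] .
  then have "0 < lam (supp_idx n lam r)" "lam (supp_idx n lam r) < l"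
    using assms(1) by (auto simp: supp_def)
  then show ?thesis
    by (simp add: cong_0_iff nat_dvd_not_less)
qed

lemma lam_sup_supp_idx:
  assumes r: "r \<in> {1..card (supp n lam)}"
  shows "lam_sup n lam (supp_idx n lam r) =
    (\<Sum>s=1..<r. int (lam (supp_idx n lam s))) -
    (\<Sum>s\<in>{r<..card (supp n lam)}. int (lam (supp_idx n lam s)))"
proof -
  let ?S = "supp n lam" and ?m = "card (supp n lam)" and ?g = "supp_idx n lam"
  define j where "j = ?g r"
  have S: "?g ` {1..?m} = ?S" and inj: "inj_on ?g {1..?m}"
    using bij_betw_supp_idx by (auto simp: bij_betw_def)
  have "j \<in> {1..n}"
    using bij_betw_apply[OF bij_betw_supp_idx r] by (simp add: j_def supp_def)
  then have "(\<Sum>k=1..j-1. int (lam k)) = (\<Sum>k\<in>?S \<inter> {..<j}. int (lam k))"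
    by (intro sum.mono_neutral_right) (auto simp: supp_def)
  also have "?S \<inter> {..<j} = ?g ` {s\<in>{1..?m}. s < r}"
    unfolding j_def strict_mono_on_image_Int_lessThan[OF supp_idx_strict_mono r, symmetric] S ..
  also have "{s\<in>{1..?m}. s < r} = {1..<r}"
    using r by auto
  also have "(\<Sum>k\<in>?g ` {1..<r}. int (lam k)) = (\<Sum>s=1..<r. int (lam (?g s)))"
    using r by (intro sum.reindex_cong[OF inj_on_subset[OF inj]]) auto
  finally have below: "(\<Sum>k=1..j-1. int (lam k)) = (\<Sum>s=1..<r. int (lam (?g s)))" .
  have "(\<Sum>k=j+1..n. int (lam k)) = (\<Sum>k\<in>?S \<inter> {j<..}. int (lam k))"
    by (intro sum.mono_neutral_right) (auto simp: supp_def)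
  also have "?S \<inter> {j<..} = ?g ` {s\<in>{1..?m}. r < s}"
    unfolding j_def strict_mono_on_image_Int_greaterThan[OF supp_idx_strict_mono r, symmetric] S ..
  also have "{s\<in>{1..?m}. r < s} = {r<..?m}"
    using r by auto
  also have "(\<Sum>k\<in>?g ` {r<..?m}. int (lam k)) = (\<Sum>s\<in>{r<..?m}. int (lam (?g s)))"
    using r by (intro sum.reindex_cong[OF inj_on_subset[OF inj]]) auto
  finally have above: "(\<Sum>k=j+1..n. int (lam k)) = (\<Sum>s\<in>{r<..?m}. int (lam (?g s)))" .
  show ?thesis
    unfolding lam_sup_def j_def[symmetric] below above ..
qed

lemma lam_sup_supp_idx_Suc:
  assumes "1 \<le> r" "r < card (supp n lam)"
  shows "lam_sup n lam (supp_idx n lam (Suc r)) =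
    lam_sup n lam (supp_idx n lam r) + int (lam (supp_idx n lam r)) + int (lam (supp_idx n lam (Suc r)))"
proof -
  have "{r<..card (supp n lam)} = insert (Suc r) {Suc r<..card (supp n lam)}"
    using assms by auto
  then show ?thesis
    using assms lam_sup_supp_idx[of r n lam] lam_sup_supp_idx[of "Suc r" n lam] by simp
qed

lemma lam_sup_supp_idx_last:
  assumes "card (supp n lam) \<ge> 1"
  shows "lam_sup n lam (supp_idx n lam (card (supp n lam))) =
    (\<Sum>s=1..<card (supp n lam). int (lam (supp_idx n lam s)))"
  using assms lam_sup_supp_idx[of "card (supp n lam)" n lam] by simp

(* The right-hand sides of the congruence (a) and of the exponent in (b), as functions of
   a_1 = lambda_{i_1} and k \<mapsto> i_k.  At r = 1 the closed form of (a) would give a_1 - 2 i_1,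
   hence the case split. *)
definition forced_weight :: "int \<Rightarrow> (nat \<Rightarrow> int) \<Rightarrow> nat \<Rightarrow> int" where
  "forced_weight a\<^sub>1 i r =
    (if r = 1 then a\<^sub>1
     else (-1) ^ (r - 1) * a\<^sub>1 + (-1) ^ r * i 1 - i r + 2 * (\<Sum>k=2..r-1. (-1) ^ (r - 1 + k) * i k))"

definition forced_exponent :: "int \<Rightarrow> (nat \<Rightarrow> int) \<Rightarrow> nat \<Rightarrow> int" where
  "forced_exponent a\<^sub>1 i m =
    (if odd m then (\<Sum>k=1..m. (-1) ^ (k - 1) * i k) else a\<^sub>1 + (\<Sum>k=2..m. (-1) ^ k * i k))"

lemma forced_weight_Suc:
  assumes "r \<ge> 1"
  shows "forced_weight a\<^sub>1 i (Suc r) = - forced_weight a\<^sub>1 i r - i (Suc r) + i r"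
proof (cases "r = 1")
  case True
  then show ?thesis
    by (simp add: forced_weight_def)
next
  case False
  then obtain q where q: "r = Suc q" "q \<ge> 1"
    using assms by (cases r) auto
  have "(\<Sum>k=2..r. (-1::int) ^ (r + k) * i k) = (\<Sum>k=2..r-1. (-1) ^ (r + k) * i k) + i r"
    using q by (simp add: add.commute)
  moreover have "(\<Sum>k=2..r-1. (-1::int) ^ (r - 1 + k) * i k) = - (\<Sum>k=2..r-1. (-1) ^ (r + k) * i k)"
    by (simp add: q sum_negf[symmetric])
  ultimately show ?thesis
    using False q by (simp add: forced_weight_def algebra_simps)
qed

lemma sum_alternating_from_1:
  assumes "m \<ge> 1"
  shows "(\<Sum>k=1..m. (-1::int) ^ (k - 1) * i k) = i 1 - (\<Sum>k=2..m. (-1) ^ k * i k)"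
  using assms by (induction m rule: nat_induct_at_least) auto

lemma forced_exponent_Suc_add:
  assumes "m \<ge> 1"
  shows "forced_exponent a\<^sub>1 i (Suc m) + forced_exponent a\<^sub>1 i m = a\<^sub>1 + i 1 + i (Suc m)"
  using assms sum_alternating_from_1[of m i] sum_alternating_from_1[of "Suc m" i]
  by (simp add: forced_exponent_def del: sum.cl_ivl_Suc) (simp add: algebra_simps)

lemma forced_weight_eq_forced_exponent:
  assumes "r \<ge> 1"
  shows "forced_weight a\<^sub>1 i r = a\<^sub>1 + i 1 + i r - 2 * forced_exponent a\<^sub>1 i r"
  using assms
proof (induction r rule: nat_induct_at_least)
  case base
  then show ?case
    by (simp add: forced_weight_def forced_exponent_def)
next
  case (Suc r)
  then show ?case
    using forced_weight_Suc[OF Suc.hyps, of a\<^sub>1 i] forced_exponent_Suc_add[OF Suc.hyps, of a\<^sub>1 i]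
    by linarith
qed

lemma sum_forced_weight:
  assumes "m \<ge> 1"
  shows "(\<Sum>s=1..<m. forced_weight a\<^sub>1 i s) + i m = forced_exponent a\<^sub>1 i m"
  using assms
proof (induction m rule: nat_induct_at_least)
  case base
  then show ?case
    by (simp add: forced_exponent_def)
next
  case (Suc m)
  have "(\<Sum>s=1..<Suc m. forced_weight a\<^sub>1 i s) =
      (\<Sum>s=1..<m. forced_weight a\<^sub>1 i s) + forced_weight a\<^sub>1 i m"
    using Suc.hyps by simp
  then show ?case
    using Suc.IH forced_weight_eq_forced_exponent[OF Suc.hyps, of a\<^sub>1 i]
      forced_exponent_Suc_add[OF Suc.hyps, of a\<^sub>1 i]
    by linarith
qed

lemma cong_all_eq_first_iff:
  "(\<forall>r\<in>{1..m}. [f r = f 1] (mod l)) \<longleftrightarrow> (\<forall>r\<in>{1..<m}. [f (Suc r) = f r] (mod l))"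
proof
  assume all: "\<forall>r\<in>{1..m}. [f r = f 1] (mod l)"
  show "\<forall>r\<in>{1..<m}. [f (Suc r) = f r] (mod l)"
  proof
    fix r
    assume "r \<in> {1..<m}"
    then have "[f (Suc r) = f 1] (mod l)" "[f r = f 1] (mod l)"
      using all by auto
    then show "[f (Suc r) = f r] (mod l)"
      by (blast intro: cong_trans cong_sym)
  qed
next
  assume consecutive: "\<forall>r\<in>{1..<m}. [f (Suc r) = f r] (mod l)"
  have "[f r = f 1] (mod l)" if "1 \<le> r" "r \<le> m" for r
    using that
  proof (induction r rule: nat_induct_at_least)
    case (Suc r)
    then have "[f (Suc r) = f r] (mod l)" "[f r = f 1] (mod l)"
      using consecutive by auto
    then show ?case
      by (rule cong_trans)
  qed simp
  then show "\<forall>r\<in>{1..m}. [f r = f 1] (mod l)"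
    by simp
qed

lemma cong_forced_weight_iff:
  fixes a i :: "nat \<Rightarrow> int"
  shows "(\<forall>r\<in>{1..m}. [a r = forced_weight (a 1) i r] (mod l)) \<longleftrightarrow>
    (\<forall>r\<in>{1..<m}. [a r + a (Suc r) + i (Suc r) - i r = 0] (mod l))"
proof -
  define d where "d r = a r - forced_weight (a 1) i r" for r
  have d_Suc: "a r + a (Suc r) + i (Suc r) - i r = d (Suc r) + d r" if "r \<ge> 1" for r
    using forced_weight_Suc[OF that] by (simp add: d_def)
  have "(\<forall>r\<in>{1..m}. l dvd d r) \<longleftrightarrow> (\<forall>r\<in>{1..<m}. l dvd d (Suc r) + d r)"
  proof
    assume "\<forall>r\<in>{1..m}. l dvd d r"
    then show "\<forall>r\<in>{1..<m}. l dvd d (Suc r) + d r"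
      by simp
  next
    assume consecutive: "\<forall>r\<in>{1..<m}. l dvd d (Suc r) + d r"
    have "l dvd d r" if "1 \<le> r" "r \<le> m" for r
      using that
    proof (induction r rule: nat_induct_at_least)
      case base
      then show ?case
        by (simp add: d_def forced_weight_def)
    next
      case (Suc r)
      then have "l dvd (d (Suc r) + d r) - d r"
        using consecutive by (intro dvd_diff) auto
      then show ?case
        by simp
    qed
    then show "\<forall>r\<in>{1..m}. l dvd d r"
      by simp
  qed
  then show ?thesis
    by (simp add: d_Suc cong_0_iff cong_iff_dvd_diff d_def)
qed

lemma cong_all_eq_first_iff_forced_weight:
  fixes a i f :: "nat \<Rightarrow> int"
  assumes "\<And>r. 1 \<le> r \<Longrightarrow> r < m \<Longrightarrow> f (Suc r) - f r = a r + a (Suc r) + i (Suc r) - i r"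
  shows "(\<forall>r\<in>{1..m}. [f r = f 1] (mod l)) \<longleftrightarrow>
    (\<forall>r\<in>{1..m}. [a r = forced_weight (a 1) i r] (mod l))"
proof -
  have "[f (Suc r) = f r] (mod l) \<longleftrightarrow> [a r + a (Suc r) + i (Suc r) - i r = 0] (mod l)"
    if "r \<in> {1..<m}" for r
    using cong_diff_iff_cong_0[of "f (Suc r)" "f r" l] assms that by simp
  then show ?thesis
    unfolding cong_all_eq_first_iff cong_forced_weight_iff by simp
qed

lemma cong_forced_exponent:
  fixes a i :: "nat \<Rightarrow> int"
  assumes "m \<ge> 1" "\<forall>r\<in>{1..m}. [a r = forced_weight (a 1) i r] (mod l)"
  shows "[(\<Sum>s=1..<m. a s) + i m = forced_exponent (a 1) i m] (mod l)"
proof -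
  have "[(\<Sum>s=1..<m. a s) + i m = (\<Sum>s=1..<m. forced_weight (a 1) i s) + i m] (mod l)"
    using assms(2) by (intro cong_add cong_sum) auto
  then show ?thesis
    by (simp only: sum_forced_weight[OF assms(1)])
qed

lemma cong_forced_weight_nonzero_iff:
  fixes a i :: "nat \<Rightarrow> int"
  assumes "\<forall>r\<in>{1..m}. [a r \<noteq> 0] (mod l)"
  shows "(\<forall>r\<in>{1..m}. [a r = forced_weight (a 1) i r] (mod l)) \<longleftrightarrow>
    (\<forall>r\<in>{2..m}. [a r = forced_weight (a 1) i r] (mod l) \<and> [forced_weight (a 1) i r \<noteq> 0] (mod l))"
proof -
  have nonzero: "[forced_weight (a 1) i r \<noteq> 0] (mod l)"
    if "r \<in> {1..m}" "[a r = forced_weight (a 1) i r] (mod l)" for r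
  proof
    assume "[forced_weight (a 1) i r = 0] (mod l)"
    with that(2) have "[a r = 0] (mod l)"
      by (rule cong_trans)
    with that(1) assms show False
      by simp
  qed
  have "[a r = forced_weight (a 1) i r] (mod l)"
    if "r \<in> {1..m}" "\<forall>r\<in>{2..m}. [a r = forced_weight (a 1) i r] (mod l)" for r
    using that by (cases "r = 1") (auto simp: forced_weight_def)
  then show ?thesis
    using nonzero by auto
qed

lemma cong_supp_exponents_iff:
  fixes n :: nat and lam :: "nat \<Rightarrow> nat"
  defines "a \<equiv> \<lambda>r. int (lam (supp_idx n lam r))" and "i \<equiv> \<lambda>r. int (supp_idx n lam r)"
    and "f \<equiv> \<lambda>r. lam_sup n lam (supp_idx n lam r) + int (supp_idx n lam r)"
  shows "(\<forall>r\<in>{1..card (supp n lam)}. [f r = f 1] (mod l)) \<longleftrightarrow>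
    (\<forall>r\<in>{1..card (supp n lam)}. [a r = forced_weight (a 1) i r] (mod l))"
  by (rule cong_all_eq_first_iff_forced_weight) (simp add: a_def i_def f_def lam_sup_supp_idx_Suc)

lemma cong_supp_exponent_forced_exponent:
  fixes n :: nat and lam :: "nat \<Rightarrow> nat"
  defines "a \<equiv> \<lambda>r. int (lam (supp_idx n lam r))" and "i \<equiv> \<lambda>r. int (supp_idx n lam r)"
    and "f \<equiv> \<lambda>r. lam_sup n lam (supp_idx n lam r) + int (supp_idx n lam r)"
  assumes m: "card (supp n lam) \<ge> 1"
    and weights: "\<forall>r\<in>{1..card (supp n lam)}. [a r = forced_weight (a 1) i r] (mod l)"
  shows "[f 1 = forced_exponent (a 1) i (card (supp n lam))] (mod l)"
proof -
  let ?m = "card (supp n lam)"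
  have "[f 1 = f ?m] (mod l)"
    using weights cong_supp_exponents_iff[of n lam l] m unfolding a_def i_def f_def
    by (auto intro: cong_sym)
  also have "f ?m = (\<Sum>s=1..<?m. a s) + i ?m"
    using m by (simp add: f_def a_def i_def lam_sup_supp_idx_last)
  also have "[\<dots> = forced_exponent (a 1) i ?m] (mod l)"
    using m weights by (rule cong_forced_exponent)
  finally show ?thesis .
qed

theorem proposition4p15:
  fixes n l :: nat and eps ap am :: complex and lam :: "nat \<Rightarrow> nat"
  assumes "n \<ge> 1" and "l > 2" and "odd l"
    and "primitive_root_of_unity l eps"
    and "\<forall>i\<in>{1..n}. lam i < l"
    and "\<exists>i\<in>{1..n}. lam i \<noteq> 0"
    and "ap \<noteq> 0" and "am \<noteq> 0"
  shows "(\<forall>i\<in>supp n lam. ap = am * eps powi (2 * (lam_sup n lam i + int i))) \<longleftrightarrow>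
    (let m = card (supp n lam); ix = supp_idx n lam;
         E = (\<lambda>r. (-1) ^ (r - 1) * int (lam (ix 1)) + (-1) ^ r * int (ix 1) - int (ix r)
                  + 2 * (\<Sum>k=2..r-1. (-1) ^ (r - 1 + k) * int (ix k)))
     in (\<forall>r\<in>{2..m}. [int (lam (ix r)) = E r] (mod int l) \<and> \<not> [E r = 0] (mod int l))
        \<and> (if odd m then ap = am * eps powi (2 * (\<Sum>k=1..m. (-1) ^ (k - 1) * int (ix k)))
           else ap = am * eps powi (2 * (int (lam (ix 1)) + (\<Sum>k=2..m. (-1) ^ k * int (ix k))))))"
proof -
  let ?m = "card (supp n lam)"
  let ?a = "\<lambda>r. int (lam (supp_idx n lam r))" and ?i = "\<lambda>r. int (supp_idx n lam r)"
  let ?f = "\<lambda>r. lam_sup n lam (supp_idx n lam r) + int (supp_idx n lam r)"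
  let ?weights = "\<forall>r\<in>{1..?m}. [?a r = forced_weight (?a 1) ?i r] (mod int l)"
  have m: "?m \<ge> 1"
    using assms(6) by (rule one_le_card_supp)
  have exponent: "eps powi (2 * ?f 1) = eps powi (2 * forced_exponent (?a 1) ?i ?m)" if ?weights
    unfolding primitive_root_of_unity_powi_double_eq_iff[OF assms(4,3)]
    by (rule cong_supp_exponent_forced_exponent[OF m that])
  have "(\<forall>j\<in>supp n lam. ap = am * eps powi (2 * (lam_sup n lam j + int j))) \<longleftrightarrow>
      (\<forall>r\<in>{1..?m}. ap = am * eps powi (2 * ?f r))"
    by (rule ball_supp_iff)
  also have "\<dots> \<longleftrightarrow> (\<forall>r\<in>{1..?m}. [?f r = ?f 1] (mod int l)) \<and> ap = am * eps powi (2 * ?f 1)"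
    using assms(3,4,8) m by (intro primitive_root_of_unity_all_eq_iff) auto
  also have "\<dots> \<longleftrightarrow> ?weights \<and> ap = am * eps powi (2 * forced_exponent (?a 1) ?i ?m)"
    using cong_supp_exponents_iff[of n lam "int l"] exponent by auto
  also have "\<dots> \<longleftrightarrow>
      (\<forall>r\<in>{2..?m}. [?a r = forced_weight (?a 1) ?i r] (mod int l) \<and>
        [forced_weight (?a 1) ?i r \<noteq> 0] (mod int l)) \<and>
      ap = am * eps powi (2 * forced_exponent (?a 1) ?i ?m)"
    using supp_weight_nonzero[OF assms(5)] by (subst cong_forced_weight_nonzero_iff) auto
  finally show ?thesis
    by (simp add: Let_def forced_weight_def forced_exponent_def)
qed

end
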